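(* There exist a simple polygon $P$ with edge set $E$, an additive-weight function $\delta\colon E\to\mathbb{R}^+_0$, and an edge $e\in E$ such that the face $f(e)$ of the additively-weighted straight skeleton is not monotone with respect to $e$ (i.e., with respect to the supporting line of $e$).
   Context: Additively-weighted wavefront: For each edge $e$ of $P$ let $\overline{e}$ be its supporting line and $n_e$ its inward unit normal. The wavefront $\mathcal{W}_{P,\delta}(t)$ is a time-dependent set of polygons with $\mathcal{W}_{P,\delta}(0)=P$. The set $e(t)$ of wavefront fragments of input edge $e$ at time $t$ lies on the line $\overline{e}+\max(0,t-\delta(e))\cdot n_e$ (stationary until time $\delta(e)$, then moving inwards self-parallel at unit speed); incidences are preserved, and wavefront vertices are intersections of supporting lines of incident wavefront edges. Events: edge events (a segment shrinks to zero length and is removed), split events (a reflex vertex reaches another part of the wavefront, which is split there), speed-change events (at time $\delta(e)$ fragments of $e$ start to move). The process ends when all wavefront polygons have collapsed. The face of $e$ is $f(e):=\bigcup_{t\ge 0}e(t)$. A set is monotone with respect to a line $\ell$ if every line perpendicular to $\ell$ intersects it in a connected set. *)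

theory Defs
  imports "HOL-Analysis.Analysis"
begin

type_synonym pt = "real \<times> real"

definition cyc_seg :: "pt list \<Rightarrow> nat \<Rightarrow> pt set" where
  "cyc_seg q i = closed_segment (q ! i) (q ! ((i + 1) mod length q))"

definition signed_area :: "pt list \<Rightarrow> real" where
  "signed_area q =
     (\<Sum>i<length q. fst (q ! i) * snd (q ! ((i + 1) mod length q))
                   - fst (q ! ((i + 1) mod length q)) * snd (q ! i)) / 2"

definition simple_polygon :: "pt list \<Rightarrow> bool" where
  "simple_polygon q \<longleftrightarrow> length q \<ge> 3 \<and> distinct q \<and>
     (\<forall>i<length q. \<forall>j<length q. i \<noteq> j \<longrightarrow>
        (if j = (i + 1) mod length q then cyc_seg q i \<inter> cyc_seg q j = {q ! j}
         else if i = (j + 1) mod length q then cyc_seg q i \<inter> cyc_seg q j = {q ! i}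
         else cyc_seg q i \<inter> cyc_seg q j = {}))"

section \<open>Input polygon P (counterclockwise vertex list vs; edge i goes from vs!i to vs!(i+1))\<close>

definition edir :: "pt list \<Rightarrow> nat \<Rightarrow> pt" where
  "edir vs i = vs ! ((i + 1) mod length vs) - vs ! i"

text \<open>Inward unit normal (interior lies to the left for a counterclockwise polygon).\<close>
definition inormal :: "pt list \<Rightarrow> nat \<Rightarrow> pt" where
  "inormal vs i = (1 / norm (edir vs i)) *\<^sub>R (- snd (edir vs i), fst (edir vs i))"

text \<open>Supporting line of the wavefront of edge e at time t: stationary until w e,
  then moving inwards at unit speed.\<close>
definition wline :: "pt list \<Rightarrow> (nat \<Rightarrow> real) \<Rightarrow> nat \<Rightarrow> real \<Rightarrow> pt set" where
  "wline vs w e t = {x. inner (x - vs ! e) (inormal vs e) = max 0 (t - w e)}"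

section \<open>Wavefront polygons: cyclic lists p of input-edge labels\<close>

definition wvert :: "pt list \<Rightarrow> (nat \<Rightarrow> real) \<Rightarrow> nat list \<Rightarrow> real \<Rightarrow> nat \<Rightarrow> pt" where
  "wvert vs w p t i = (THE x. x \<in> wline vs w (p ! i) t \<and> x \<in> wline vs w (p ! ((i + 1) mod length p)) t)"

definition wlines_meet :: "pt list \<Rightarrow> (nat \<Rightarrow> real) \<Rightarrow> nat list \<Rightarrow> real \<Rightarrow> bool" where
  "wlines_meet vs w p t \<longleftrightarrow> (\<forall>i<length p.
     \<exists>!x. x \<in> wline vs w (p ! i) t \<and> x \<in> wline vs w (p ! ((i + 1) mod length p)) t)"

definition wverts :: "pt list \<Rightarrow> (nat \<Rightarrow> real) \<Rightarrow> nat list \<Rightarrow> real \<Rightarrow> pt list" where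
  "wverts vs w p t = map (wvert vs w p t) [0..<length p]"

definition wseg :: "pt list \<Rightarrow> (nat \<Rightarrow> real) \<Rightarrow> nat list \<Rightarrow> real \<Rightarrow> nat \<Rightarrow> pt set" where
  "wseg vs w p t i = closed_segment (wvert vs w p t ((i + length p - 1) mod length p)) (wvert vs w p t i)"

definition wpoly_ok :: "pt list \<Rightarrow> (nat \<Rightarrow> real) \<Rightarrow> nat list \<Rightarrow> real \<Rightarrow> bool" where
  "wpoly_ok vs w p t \<longleftrightarrow> length p \<ge> 3 \<and> set p \<subseteq> {..<length vs} \<and>
     wlines_meet vs w p t \<and>
     simple_polygon (wverts vs w p t) \<and> signed_area (wverts vs w p t) > 0 \<and>
     (\<forall>i<length p. \<exists>c>0. wvert vs w p t i - wvert vs w p t ((i + length p - 1) mod length p)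
                          = c *\<^sub>R edir vs (p ! i))"

text \<open>Cyclic sublist p!a, p!(a+1), ..., p!b.\<close>
definition cyc_sub :: "nat list \<Rightarrow> nat \<Rightarrow> nat \<Rightarrow> nat list" where
  "cyc_sub p a b = map (\<lambda>k. p ! ((a + k) mod length p)) [0..<(b + length p - a) mod length p + 1]"

text \<open>A single event at time t transforming the wavefront (list of wavefront polygons) S into S':
  collapse of a polygon, edge event, or split event.\<close>
definition wevent :: "pt list \<Rightarrow> (nat \<Rightarrow> real) \<Rightarrow> real \<Rightarrow> nat list list \<Rightarrow> nat list list \<Rightarrow> bool" where
  "wevent vs w t S S' \<longleftrightarrow> (\<exists>A p B. S = A @ [p] @ B \<and> wlines_meet vs w p t \<and>
     ((signed_area (wverts vs w p t) = 0 \<and> S' = A @ B)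
      \<or> (\<exists>i<length p. length p \<ge> 4 \<and>
           wvert vs w p t ((i + length p - 1) mod length p) = wvert vs w p t i \<and>
           S' = A @ [take i p @ drop (Suc i) p] @ B)
      \<or> (\<exists>r<length p. \<exists>s<length p. s \<noteq> r \<and> s \<noteq> (r + 1) mod length p \<and>
           wvert vs w p t r \<in> wseg vs w p t s \<and>
           S' = A @ [cyc_sub p ((r + 1) mod length p) s, cyc_sub p s r] @ B)))"

definition wavefront_prop :: "pt list \<Rightarrow> (nat \<Rightarrow> real) \<Rightarrow> real list \<Rightarrow> nat list list list \<Rightarrow> bool" where
  "wavefront_prop vs w ts Ss \<longleftrightarrow>
     length ts = length Ss \<and> length ts \<ge> 2 \<and> ts ! 0 = 0 \<and> sorted_wrt (<) ts \<and>
     Ss ! 0 = [[0..<length vs]] \<and> last Ss = [] \<and>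
     (\<forall>j. j + 1 < length ts \<longrightarrow>
        (\<forall>t\<in>{ts ! j<..<ts ! (j + 1)}. \<forall>p\<in>set (Ss ! j). wpoly_ok vs w p t)) \<and>
     (\<forall>j. 0 < j \<and> j < length ts \<longrightarrow> (wevent vs w (ts ! j))\<^sup>*\<^sup>* (Ss ! (j - 1)) (Ss ! j))"

text \<open>Face f(e): union over all times of the wavefront fragments of e (closure adds event times).\<close>
definition wface :: "pt list \<Rightarrow> (nat \<Rightarrow> real) \<Rightarrow> real list \<Rightarrow> nat list list list \<Rightarrow> nat \<Rightarrow> pt set" where
  "wface vs w ts Ss e = closure
     (\<Union>j\<in>{j. j + 1 < length ts}. \<Union>t\<in>{ts ! j<..<ts ! (j + 1)}. \<Union>p\<in>set (Ss ! j).
        \<Union>i\<in>{i. i < length p \<and> p ! i = e}. wseg vs w p t i)"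

definition monotone_wrt :: "pt set \<Rightarrow> pt \<Rightarrow> bool" where
  "monotone_wrt S d \<longleftrightarrow> (\<forall>c. connected (S \<inter> {x. inner x d = c}))"

end

theory Submission
  imports Defs
begin

text \<open>Take the pentagon (0,0), (4,0), (7,-4), (7,11), (0,11) with weight 0 on the bottom edge e,
  weight 2 on the slanted edge after it and weight 20 on the others. Until time 2 only e moves, and
  the vertex where the wavefronts of e and of the slanted edge meet runs left along e(t); from
  time 2 on the slanted edge moves too and this vertex runs right again. So the vertical line
  x = 3 meets f(e) at heights in (1/2, 1) and in (4, 5) but not at height 2.

  Nothing else happens before the polygon collapses at time 11: a wavefront polygon that is simple,
  positively oriented and has all edges parallel to their input edges admits no event, so every
  propagation keeps the input polygon as its only wavefront polygon up to time 11.\<close>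

section \<open>Segments and simple polygons\<close>

lemma inner_in_closed_segment:
  fixes a b x n :: "'a::real_inner"
  assumes "x \<in> closed_segment a b"
  shows "inner x n \<in> closed_segment (inner a n) (inner b n)"
proof -
  have "linear (\<lambda>x. inner x n)"
    by (simp add: bounded_linear.linear bounded_linear_inner_left)
  then have "closed_segment (inner a n) (inner b n) = (\<lambda>x. inner x n) ` closed_segment a b"
    by (rule closed_segment_linear_image)
  with assms show ?thesis by blast
qed

lemma Pair_in_closed_segment_const:
  assumes "x \<in> closed_segment a b"
  shows "(x, c) \<in> closed_segment (a, c) (b, c)"
proof -
  obtain u where "0 \<le> u" "u \<le> 1" "x = (1 - u) *\<^sub>R a + u *\<^sub>R b"
    using assms by (auto simp: in_segment)
  then show ?thesis unfolding in_segment by (intro exI[of _ u]) (simp add: algebra_simps)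
qed

lemma closed_segments_disjoint_if_separated:
  fixes a b c d n :: "'a::real_inner"
  assumes "inner a n < k" "inner b n < k" "k < inner c n" "k < inner d n"
  shows "closed_segment a b \<inter> closed_segment c d = {}"
  using inner_in_closed_segment[of _ a b n] inner_in_closed_segment[of _ c d n] assms
  by (fastforce simp: closed_segment_eq_real_ivl split: if_splits)

lemma closed_segments_Int_common_endpoint:
  fixes a b c n :: "'a::real_inner"
  assumes "inner (c - b) n = 0" "inner (a - b) n \<noteq> 0"
  shows "closed_segment a b \<inter> closed_segment b c = {b}"
proof (intro equalityI subsetI)
  fix x assume x: "x \<in> closed_segment a b \<inter> closed_segment b c"
  obtain u where u: "u \<le> 1" "x = (1 - u) *\<^sub>R a + u *\<^sub>R b"
    using x by (auto simp: in_segment)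
  have "inner x n = inner b n"
    using inner_in_closed_segment[of x b c n] x assms(1) by (auto simp: inner_diff_left)
  moreover have "x - b = (1 - u) *\<^sub>R (a - b)"
    using u by (simp add: algebra_simps)
  then have "inner x n - inner b n = (1 - u) * inner (a - b) n"
    by (metis inner_diff_left inner_scaleR_left)
  ultimately have "u = 1" using assms(2) by simp
  with u show "x \<in> {b}" by simp
qed auto

lemma simple_polygon_pentagon:
  assumes "distinct [q0, q1, q2, q3, q4]"
    and "closed_segment q0 q1 \<inter> closed_segment q1 q2 = {q1}"
    and "closed_segment q1 q2 \<inter> closed_segment q2 q3 = {q2}"
    and "closed_segment q2 q3 \<inter> closed_segment q3 q4 = {q3}"
    and "closed_segment q3 q4 \<inter> closed_segment q4 q0 = {q4}"
    and "closed_segment q4 q0 \<inter> closed_segment q0 q1 = {q0}"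
    and "closed_segment q0 q1 \<inter> closed_segment q2 q3 = {}"
    and "closed_segment q0 q1 \<inter> closed_segment q3 q4 = {}"
    and "closed_segment q1 q2 \<inter> closed_segment q3 q4 = {}"
    and "closed_segment q1 q2 \<inter> closed_segment q4 q0 = {}"
    and "closed_segment q2 q3 \<inter> closed_segment q4 q0 = {}"
  shows "simple_polygon [q0, q1, q2, q3, q4]" (is "simple_polygon ?q")
proof -
  have "if j = (i + 1) mod 5 then cyc_seg ?q i \<inter> cyc_seg ?q j = {?q ! j}
        else if i = (j + 1) mod 5 then cyc_seg ?q i \<inter> cyc_seg ?q j = {?q ! i}
        else cyc_seg ?q i \<inter> cyc_seg ?q j = {}"
    if "i < 5" "j < 5" "i \<noteq> j" for i j
  proof -
    from that(1,2) have "i = 0 \<or> i = 1 \<or> i = 2 \<or> i = 3 \<or> i = 4"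
        "j = 0 \<or> j = 1 \<or> j = 2 \<or> j = 3 \<or> j = 4"
      by linarith+
    with that(3) show ?thesis
      by (elim disjE)
        (simp_all add: cyc_seg_def assms(2-) assms(2-)[THEN trans[OF Int_commute]])
  qed
  with assms(1) show ?thesis unfolding simple_polygon_def by simp
qed

lemma simple_polygon_vertex_in_cyc_seg:
  assumes "simple_polygon q" "r < length q" "k < length q" "q ! r \<in> cyc_seg q k"
  shows "r = k \<or> r = (k + 1) mod length q"
proof (rule ccontr)
  assume c: "\<not> (r = k \<or> r = (k + 1) mod length q)"
  have "q ! r \<in> cyc_seg q r" by (simp add: cyc_seg_def)
  moreover have "if k = (r + 1) mod length q then cyc_seg q r \<inter> cyc_seg q k = {q ! k}
         else cyc_seg q r \<inter> cyc_seg q k = {}"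
    using assms(1-3) c unfolding simple_polygon_def by metis
  moreover have "q ! r \<noteq> q ! k"
    using assms(1-3) c by (simp add: simple_polygon_def nth_eq_iff_index_eq)
  ultimately show False using assms(4) by (auto split: if_splits)
qed

section \<open>Propagations keeping a proper input polygon\<close>

lemma length_wverts [simp]: "length (wverts vs w p t) = length p"
  by (simp add: wverts_def)

lemma nth_wverts [simp]: "k < length p \<Longrightarrow> wverts vs w p t ! k = wvert vs w p t k"
  by (simp add: wverts_def)

lemma mod_pred_Suc:
  fixes s n :: nat
  assumes "s < n"
  shows "((s + n - 1) mod n + 1) mod n = s"
proof -
  have "((s + n - 1) mod n + 1) mod n = (s + n - 1 + 1) mod n"
    by (simp add: mod_Suc_eq)
  also have "\<dots> = s" using assms by simp
  finally show ?thesis .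
qed

lemma mod_pred_less:
  fixes s n :: nat
  shows "s < n \<Longrightarrow> (s + n - 1) mod n < n"
  by simp

lemma wseg_eq_cyc_seg:
  assumes "s < length p"
  shows "wseg vs w p t s = cyc_seg (wverts vs w p t) ((s + length p - 1) mod length p)"
  using assms mod_pred_less[OF assms]
  by (simp add: wseg_def cyc_seg_def mod_pred_Suc[simplified])

lemma wvert_in_wlines:
  assumes "wlines_meet vs w p t" "k < length p"
  shows "wvert vs w p t k \<in> wline vs w (p ! k) t"
    and "wvert vs w p t k \<in> wline vs w (p ! ((k + 1) mod length p)) t"
  using theI'[OF assms(1)[unfolded wlines_meet_def, rule_format, OF assms(2)]]
  by (simp_all add: wvert_def)

lemma wseg_subset_wline:
  assumes "wlines_meet vs w p t" "i < length p"
  shows "wseg vs w p t i \<subseteq> wline vs w (p ! i) t"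
proof
  let ?k = "(i + length p - 1) mod length p"
  have k: "?k < length p" using assms(2) by (rule mod_pred_less)
  fix x assume "x \<in> wseg vs w p t i"
  then have "inner x (inormal vs (p ! i))
      \<in> closed_segment (inner (wvert vs w p t ?k) (inormal vs (p ! i)))
                        (inner (wvert vs w p t i) (inormal vs (p ! i)))"
    unfolding wseg_def by (rule inner_in_closed_segment)
  moreover have "wvert vs w p t ?k \<in> wline vs w (p ! i) t"
    using wvert_in_wlines(2)[OF assms(1) k] assms(2) by (simp add: mod_pred_Suc[simplified])
  moreover have "wvert vs w p t i \<in> wline vs w (p ! i) t"
    using wvert_in_wlines(1)[OF assms] .
  ultimately show "x \<in> wline vs w (p ! i) t"
    by (auto simp: wline_def inner_diff_left closed_segment_eq_real_ivl split: if_splits)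
qed

lemma wpoly_ok_no_wevent:
  assumes "\<forall>p\<in>set S. wpoly_ok vs w p t"
  shows "\<not> wevent vs w t S S'"
proof
  assume "wevent vs w t S S'"
  then obtain A p B where "S = A @ [p] @ B" and ev:
     "signed_area (wverts vs w p t) = 0
      \<or> (\<exists>i<length p. wvert vs w p t ((i + length p - 1) mod length p) = wvert vs w p t i)
      \<or> (\<exists>r<length p. \<exists>s<length p. s \<noteq> r \<and> s \<noteq> (r + 1) mod length p \<and>
           wvert vs w p t r \<in> wseg vs w p t s)"
    unfolding wevent_def by blast
  then have ok: "wpoly_ok vs w p t" using assms by simp
  let ?n = "length p" and ?q = "wverts vs w p t"
  have n: "3 \<le> ?n" and sp: "simple_polygon ?q" and area: "signed_area ?q > 0"
    using ok by (auto simp: wpoly_ok_def)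
  have "distinct ?q" using sp by (simp add: simple_polygon_def)
  then have vert_eq: "wvert vs w p t a = wvert vs w p t b \<longleftrightarrow> a = b" if "a < ?n" "b < ?n" for a b
    using nth_eq_iff_index_eq[of ?q a b] that by simp
  from ev show False
  proof (elim disjE exE conjE)
    show "signed_area ?q = 0 \<Longrightarrow> False" using area by simp
  next
    fix i assume i: "i < ?n" and "wvert vs w p t ((i + ?n - 1) mod ?n) = wvert vs w p t i"
    moreover have "(i + ?n - 1) mod ?n \<noteq> i"
      using i n by (cases i) auto
    moreover have "(i + ?n - 1) mod ?n < ?n" using i by (rule mod_pred_less)
    ultimately show False using vert_eq i by blast
  next
    fix r s assume r: "r < ?n" and s: "s < ?n" and "s \<noteq> r" "s \<noteq> (r + 1) mod ?n"
      and "wvert vs w p t r \<in> wseg vs w p t s"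
    then have "?q ! r \<in> cyc_seg ?q ((s + ?n - 1) mod ?n)" by (simp add: wseg_eq_cyc_seg)
    from simple_polygon_vertex_in_cyc_seg[OF sp _ _ this] r s mod_pred_less[OF s]
    have "r = (s + ?n - 1) mod ?n \<or> r = s" by (simp add: mod_pred_Suc[simplified])
    with \<open>s \<noteq> r\<close> \<open>s \<noteq> (r + 1) mod ?n\<close> s
    show False by (auto simp: mod_pred_Suc[simplified])
  qed
qed

lemma sorted_wrt_less_bracket:
  fixes ts :: "'a::linorder list"
  assumes "sorted_wrt (<) ts" "ts \<noteq> []" "hd ts < t" "t < last ts" "t \<notin> set ts"
  shows "\<exists>j. j + 1 < length ts \<and> ts ! j < t \<and> t < ts ! (j + 1)"
  using assms
proof (induction ts)
  case Nil
  then show ?case by simp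
next
  case (Cons a ts)
  then have "ts \<noteq> []" by auto
  show ?case
  proof (cases "t < hd ts")
    case True
    then show ?thesis
      using \<open>ts \<noteq> []\<close> Cons.prems by (intro exI[of _ 0]) (simp add: hd_conv_nth)
  next
    case False
    then have "hd ts < t"
      using Cons.prems \<open>ts \<noteq> []\<close> by (metis hd_in_set list.set_intros(2) not_less_iff_gr_or_eq)
    then obtain j where "j + 1 < length ts" "ts ! j < t" "t < ts ! (j + 1)"
      using Cons.IH Cons.prems \<open>ts \<noteq> []\<close> by auto
    then show ?thesis by (intro exI[of _ "Suc j"]) simp
  qed
qed

lemma obtain_Ioo_not_in_finite:
  fixes a b :: real
  assumes "a < b" "finite A"
  obtains t where "t \<in> {a<..<b}" "t \<notin> A"
proof -
  have "infinite ({a<..<b} - A)" using assms by (simp add: Diff_infinite_finite)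
  then obtain t where "t \<in> {a<..<b} - A" by (metis ex_in_conv finite.emptyI)
  then show ?thesis using that by blast
qed

lemma connected_vertical_section:
  fixes S :: "(real \<times> real) set"
  assumes "connected S" "S \<subseteq> {x. fst x = c}" "(c, a) \<in> S" "(c, b) \<in> S" "a \<le> y" "y \<le> b"
  shows "(c, y) \<in> S"
proof -
  have "is_interval (snd ` S)"
    using connected_continuous_image[OF continuous_on_snd[OF continuous_on_id] assms(1)]
    by (simp add: is_interval_connected_1)
  moreover have "a \<in> snd ` S" "b \<in> snd ` S" using assms(3,4) by force+
  ultimately have "y \<in> snd ` S" using assms(5,6) unfolding is_interval_1 by blast
  with assms(2) show ?thesis by force
qed

lemma wavefront_prop_time_nonneg:
  assumes "wavefront_prop vs w ts Ss" "j < length ts"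
  shows "0 \<le> ts ! j"
proof (cases j)
  case 0
  then show ?thesis using assms by (simp add: wavefront_prop_def)
next
  case (Suc k)
  then show ?thesis
    using assms sorted_wrt_nth_less[of "(<)" ts 0 j] by (auto simp: wavefront_prop_def)
qed

lemma wavefront_prop_initial_state:
  assumes wp: "wavefront_prop vs w ts Ss"
    and ok: "\<And>t. 0 < t \<Longrightarrow> t < T \<Longrightarrow> wpoly_ok vs w [0..<length vs] t"
  shows "j < length ts \<Longrightarrow> ts ! j < T \<Longrightarrow> Ss ! j = [[0..<length vs]]"
proof (induction j)
  case 0
  from wp show ?case by (simp add: wavefront_prop_def)
next
  case (Suc j)
  have "sorted_wrt (<) ts" using wp by (simp add: wavefront_prop_def)
  then have "ts ! j < ts ! Suc j" using sorted_wrt_nth_less Suc.prems by blast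
  then have IH: "Ss ! j = [[0..<length vs]]" using Suc by simp
  have "0 < ts ! Suc j"
    using \<open>ts ! j < ts ! Suc j\<close> wavefront_prop_time_nonneg[OF wp, of j] Suc.prems by simp
  then have no_event: "\<not> wevent vs w (ts ! Suc j) [[0..<length vs]] S'" for S'
    using ok Suc.prems by (intro wpoly_ok_no_wevent) simp
  have "(wevent vs w (ts ! Suc j))\<^sup>*\<^sup>* [[0..<length vs]] (Ss ! Suc j)"
    using wp Suc.prems IH unfolding wavefront_prop_def by (metis diff_Suc_1 zero_less_Suc)
  then show ?case using no_event by (cases rule: converse_rtranclpE) auto
qed

lemma wavefront_prop_last_time:
  assumes wp: "wavefront_prop vs w ts Ss"
    and ok: "\<And>t. 0 < t \<Longrightarrow> t < T \<Longrightarrow> wpoly_ok vs w [0..<length vs] t"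
  shows "T \<le> last ts"
proof (rule ccontr)
  assume "\<not> T \<le> last ts"
  moreover have "ts \<noteq> []" "Ss \<noteq> []" "length Ss = length ts" "last Ss = []"
    using wp by (auto simp: wavefront_prop_def)
  ultimately have "Ss ! (length ts - 1) = []" "ts ! (length ts - 1) < T"
    by (auto simp: last_conv_nth)
  with wavefront_prop_initial_state[OF wp ok, where j = "length ts - 1"] \<open>ts \<noteq> []\<close>
  show False by simp
qed

definition wfragments ::
    "pt list \<Rightarrow> (nat \<Rightarrow> real) \<Rightarrow> real list \<Rightarrow> nat list list list \<Rightarrow> nat \<Rightarrow> pt set" where
  "wfragments vs w ts Ss e =
     (\<Union>j\<in>{j. j + 1 < length ts}. \<Union>t\<in>{ts ! j<..<ts ! (j + 1)}. \<Union>p\<in>set (Ss ! j).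
        \<Union>i\<in>{i. i < length p \<and> p ! i = e}. wseg vs w p t i)"

lemma wface_eq_closure_wfragments: "wface vs w ts Ss e = closure (wfragments vs w ts Ss e)"
  by (simp add: wface_def wfragments_def)

lemma wseg_subset_wfragments:
  assumes wp: "wavefront_prop vs w ts Ss"
    and ok: "\<And>t. 0 < t \<Longrightarrow> t < T \<Longrightarrow> wpoly_ok vs w [0..<length vs] t"
    and t: "0 < t" "t < T" "t \<notin> set ts" and e: "e < length vs"
  shows "wseg vs w [0..<length vs] t e \<subseteq> wfragments vs w ts Ss e"
proof -
  have "ts \<noteq> []" "sorted_wrt (<) ts"
    using wp by (auto simp: wavefront_prop_def)
  moreover have "hd ts = 0"
    using wp \<open>ts \<noteq> []\<close> by (simp add: wavefront_prop_def hd_conv_nth)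
  ultimately obtain j where j: "j + 1 < length ts" "ts ! j < t" "t < ts ! (j + 1)"
    using sorted_wrt_less_bracket[of ts t] wavefront_prop_last_time[OF wp ok] t by force
  then have "Ss ! j = [[0..<length vs]]"
    using wavefront_prop_initial_state[OF wp ok, where j = j] t by simp
  with j e show ?thesis unfolding wfragments_def by fastforce
qed

lemma wfragments_before_first_event:
  assumes wp: "wavefront_prop vs w ts Ss"
    and ok: "\<And>t. 0 < t \<Longrightarrow> t < T \<Longrightarrow> wpoly_ok vs w [0..<length vs] t"
    and y: "y \<in> wfragments vs w ts Ss e"
  obtains t where "0 < t" "y \<in> wline vs w e t" "t < T \<Longrightarrow> y \<in> wseg vs w [0..<length vs] t e"
proof -
  from y obtain j t p i where j: "j + 1 < length ts" and t: "ts ! j < t" "t < ts ! (j + 1)"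
    and p: "p \<in> set (Ss ! j)" and i: "i < length p" "p ! i = e" and seg: "y \<in> wseg vs w p t i"
    unfolding wfragments_def by auto
  have "0 < t" using t wavefront_prop_time_nonneg[OF wp, of j] j by simp
  moreover have "wpoly_ok vs w p t" using wp j t p unfolding wavefront_prop_def by auto
  then have "y \<in> wline vs w e t"
    using wseg_subset_wline[of vs w p t i] seg i by (auto simp: wpoly_ok_def)
  moreover have "y \<in> wseg vs w [0..<length vs] t e" if "t < T"
  proof -
    have "Ss ! j = [[0..<length vs]]"
      using wavefront_prop_initial_state[OF wp ok, where j = j] j t that by simp
    then show ?thesis using p i seg by simp
  qed
  ultimately show ?thesis using that by blast
qed

definition ex_poly :: "pt list" where
  "ex_poly = [(0, 0), (4, 0), (7, -4), (7, 11), (0, 11)]"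

definition ex_weight :: "nat \<Rightarrow> real" where
  "ex_weight i = (if i = 0 then 0 else if i = 1 then 2 else 20)"

lemma length_ex_poly [simp]: "length ex_poly = 5"
  by (simp add: ex_poly_def)

lemma ex_poly_simple: "simple_polygon ex_poly"
  unfolding ex_poly_def
proof (rule simple_polygon_pentagon)
  note sep = closed_segments_disjoint_if_separated and adj = closed_segments_Int_common_endpoint
  show "distinct [(0 :: real, 0 :: real), (4, 0), (7, -4), (7, 11), (0, 11)]" by auto
  show "closed_segment (0, 0) (4, 0) \<inter> closed_segment (4, 0) (7, -4) = {(4 :: real, 0 :: real)}"
    by (rule adj[where n = "(4, 3)"]) auto
  show "closed_segment (4, 0) (7, -4) \<inter> closed_segment (7, -4) (7, 11) = {(7 :: real, -4 :: real)}"
    by (rule adj[where n = "(1, 0)"]) auto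
  show "closed_segment (7, -4) (7, 11) \<inter> closed_segment (7, 11) (0, 11) = {(7 :: real, 11 :: real)}"
    by (rule adj[where n = "(0, 1)"]) auto
  show "closed_segment (7, 11) (0, 11) \<inter> closed_segment (0, 11) (0, 0) = {(0 :: real, 11 :: real)}"
    by (rule adj[where n = "(1, 0)"]) auto
  show "closed_segment (0, 11) (0, 0) \<inter> closed_segment (0, 0) (4, 0) = {(0 :: real, 0 :: real)}"
    by (rule adj[where n = "(0, 1)"]) auto
  show "closed_segment (0, 0) (4, 0) \<inter> closed_segment (7, -4) (7 :: real, 11 :: real) = {}"
    by (rule sep[where n = "(1, 0)" and k = 5]) auto
  show "closed_segment (0, 0) (4, 0) \<inter> closed_segment (7, 11) (0 :: real, 11 :: real) = {}"
    by (rule sep[where n = "(0, 1)" and k = 1]) auto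
  show "closed_segment (4, 0) (7, -4) \<inter> closed_segment (7, 11) (0 :: real, 11 :: real) = {}"
    by (rule sep[where n = "(0, 1)" and k = 1]) auto
  show "closed_segment (4, 0) (7, -4) \<inter> closed_segment (0, 11) (0 :: real, 0 :: real) = {}"
    by (rule sep[where n = "(-1, 0)" and k = "-2"]) auto
  show "closed_segment (7, -4) (7, 11) \<inter> closed_segment (0, 11) (0 :: real, 0 :: real) = {}"
    by (rule sep[where n = "(-1, 0)" and k = "-3"]) auto
qed

lemma ex_edir:
  assumes "i < 5"
  shows "edir ex_poly i = [(4, 0), (3, -4), (0, 15), (-7, 0), (0, -11)] ! i"
proof -
  have "i = 0 \<or> i = 1 \<or> i = 2 \<or> i = 3 \<or> i = 4" using assms by linarith
  then show ?thesis by (elim disjE) (simp_all add: edir_def ex_poly_def)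
qed

lemma ex_inormal:
  assumes "i < 5"
  shows "inormal ex_poly i = [(0, 1), (4/5, 3/5), (-1, 0), (0, -1), (1, 0)] ! i"
proof -
  have "sqrt 25 = 5" by (rule real_sqrt_unique) auto
  moreover have "i = 0 \<or> i = 1 \<or> i = 2 \<or> i = 3 \<or> i = 4" using assms by linarith
  ultimately show ?thesis
    unfolding inormal_def ex_edir[OF assms] by (elim disjE) (simp_all add: norm_Pair)
qed

lemma ex_wline:
  assumes "0 \<le> t" "t \<le> 20" "i < 5"
  shows "wline ex_poly ex_weight i t =
    [{x. snd x = t}, {x. 4 * fst x + 3 * snd x = 16 + 5 * max 0 (t - 2)},
     {x. fst x = 7}, {x. snd x = 11}, {x. fst x = 0}] ! i"
proof -
  have "i = 0 \<or> i = 1 \<or> i = 2 \<or> i = 3 \<or> i = 4" using assms(3) by linarith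
  then show ?thesis
    using assms(1,2) unfolding wline_def ex_inormal[OF assms(3)]
    by (elim disjE) (auto simp: ex_weight_def ex_poly_def field_simps)
qed

lemma ex_wline0: "0 \<le> t \<Longrightarrow> wline ex_poly ex_weight 0 t = {x. snd x = t}"
  unfolding wline_def ex_inormal[of 0, simplified] by (auto simp: ex_weight_def ex_poly_def)

text \<open>The wavefronts of edges 0 and 1 meet in (ex_x01 t, t), those of edges 1 and 2 in
  (7, ex_y12 t); edge 1 starts moving at time 2.\<close>

definition ex_x01 :: "real \<Rightarrow> real" where
  "ex_x01 t = (16 + 5 * max 0 (t - 2) - 3 * t) / 4"

definition ex_y12 :: "real \<Rightarrow> real" where
  "ex_y12 t = (5 * max 0 (t - 2) - 12) / 3"

definition ex_wverts :: "real \<Rightarrow> pt list" where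
  "ex_wverts t = [(ex_x01 t, t), (7, ex_y12 t), (7, 11), (0, 11), (0, t)]"

lemma ex_wlines_Int:
  assumes "0 \<le> t" "t \<le> 20" "i < 5"
  shows "x \<in> wline ex_poly ex_weight i t \<and> x \<in> wline ex_poly ex_weight ((i + 1) mod 5) t
           \<longleftrightarrow> x = ex_wverts t ! i"
proof -
  have "i = 0 \<or> i = 1 \<or> i = 2 \<or> i = 3 \<or> i = 4" using assms(3) by linarith
  then show ?thesis using assms
    by (elim disjE; cases x) (auto simp: ex_wline ex_wverts_def ex_x01_def ex_y12_def field_simps)
qed

lemma ex_wlines_meet: "0 \<le> t \<Longrightarrow> t \<le> 20 \<Longrightarrow> wlines_meet ex_poly ex_weight [0..<5] t"
  unfolding wlines_meet_def using ex_wlines_Int by simp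

lemma ex_wvert:
  "0 \<le> t \<Longrightarrow> t \<le> 20 \<Longrightarrow> i < 5 \<Longrightarrow> wvert ex_poly ex_weight [0..<5] t i = ex_wverts t ! i"
  unfolding wvert_def using ex_wlines_Int by simp

lemma ex_wverts: "0 \<le> t \<Longrightarrow> t \<le> 20 \<Longrightarrow> wverts ex_poly ex_weight [0..<5] t = ex_wverts t"
  by (rule nth_equalityI) (simp_all add: ex_wvert, simp add: ex_wverts_def)

lemma ex_vertex_bounds: "0 < t \<Longrightarrow> t < 11 \<Longrightarrow> 0 < ex_x01 t \<and> ex_x01 t < 7 \<and> ex_y12 t < t"
  by (auto simp: ex_x01_def ex_y12_def max_def)

lemma ex_wverts_simple:
  assumes "0 < t" "t < 11"
  shows "simple_polygon (ex_wverts t)"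
  unfolding ex_wverts_def
proof (rule simple_polygon_pentagon)
  define a b where "a = ex_x01 t" and "b = ex_y12 t"
  have ab: "0 < a" "a < 7" "b < t" using ex_vertex_bounds assms by (auto simp: a_def b_def)
  note sep = closed_segments_disjoint_if_separated and adj = closed_segments_Int_common_endpoint
  show "distinct [(a, t), (7, b), (7, 11), (0, 11), (0, t)]" using ab assms by auto
  show "closed_segment (a, t) (7, b) \<inter> closed_segment (7, b) (7, 11) = {(7, b)}"
    by (rule adj[where n = "(1, 0)"]) (use ab in auto)
  show "closed_segment (7, b) (7, 11) \<inter> closed_segment (7, 11) (0, 11) = {(7 :: real, 11 :: real)}"
    by (rule adj[where n = "(0, 1)"]) (use ab assms in auto)
  show "closed_segment (7, 11) (0, 11) \<inter> closed_segment (0, 11) (0, t) = {(0 :: real, 11 :: real)}"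
    by (rule adj[where n = "(1, 0)"]) auto
  show "closed_segment (0, 11) (0, t) \<inter> closed_segment (0, t) (a, t) = {(0, t)}"
    by (rule adj[where n = "(0, 1)"]) (use assms in auto)
  show "closed_segment (0, t) (a, t) \<inter> closed_segment (a, t) (7, b) = {(a, t)}"
    by (rule adj[where n = "(t - b, 7 - a)"]) (use ab in \<open>auto simp: algebra_simps\<close>)
  show "closed_segment (a, t) (7, b) \<inter> closed_segment (7, 11) (0, 11) = {}"
    by (rule sep[where n = "(0, 1)" and k = "(t + 11) / 2"]) (use ab assms in auto)
  show "closed_segment (a, t) (7, b) \<inter> closed_segment (0, 11) (0, t) = {}"
    by (rule sep[where n = "(-1, 0)" and k = "-a / 2"]) (use ab in auto)
  show "closed_segment (7, b) (7, 11) \<inter> closed_segment (0 :: real, 11) (0, t) = {}"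
    by (rule sep[where n = "(-1, 0)" and k = "-1"]) auto
  show "closed_segment (7, b) (7, 11) \<inter> closed_segment (0, t) (a, t) = {}"
    by (rule sep[where n = "(-1, 0)" and k = "-(7 + a) / 2"]) (use ab in auto)
  show "closed_segment (7, 11) (0, 11) \<inter> closed_segment (0, t) (a, t) = {}"
    by (rule sep[where n = "(0, -1)" and k = "-(11 + t) / 2"]) (use assms in auto)
qed

text \<open>The rectangle [0,7] \<times> [t,11] plus the triangle cut off by the wavefront of edge 1.\<close>

lemma ex_wverts_signed_area:
  "signed_area (ex_wverts t) = 7 * (11 - t) + (7 - ex_x01 t) * (t - ex_y12 t) / 2"
proof -
  have "{..<length (ex_wverts t)} = {0, 1, 2, 3, 4}" by (auto simp: ex_wverts_def)
  then show ?thesis unfolding signed_area_def by (simp add: ex_wverts_def field_simps)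
qed

lemma ex_wverts_area_pos:
  assumes "0 < t" "t < 11"
  shows "0 < signed_area (ex_wverts t)"
proof -
  have "0 < (7 - ex_x01 t) * (t - ex_y12 t)" using ex_vertex_bounds[OF assms] by simp
  with assms show ?thesis by (simp add: ex_wverts_signed_area)
qed

lemma ex_wverts_area_11: "signed_area (ex_wverts 11) = 0"
  by (simp add: ex_wverts_signed_area ex_x01_def)

lemma ex_wverts_edges_parallel:
  assumes "0 < t" "t < 11" "i < 5"
  shows "\<exists>c>0. ex_wverts t ! i - ex_wverts t ! ((i + 4) mod 5) = c *\<^sub>R edir ex_poly i"
proof -
  have b: "0 < ex_x01 t" "ex_x01 t < 7" "ex_y12 t < t" using ex_vertex_bounds assms by auto
  have slope: "ex_y12 t - t = -4 * (7 - ex_x01 t) / 3"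
    by (auto simp: ex_x01_def ex_y12_def max_def field_simps)
  have "i = 0 \<or> i = 1 \<or> i = 2 \<or> i = 3 \<or> i = 4" using assms(3) by linarith
  then show ?thesis
  proof (elim disjE)
    assume "i = 0" then show ?thesis using b
      by (intro exI[of _ "ex_x01 t / 4"]) (simp add: ex_wverts_def ex_edir)
  next
    assume "i = 1" then show ?thesis using b slope
      by (intro exI[of _ "(7 - ex_x01 t) / 3"]) (simp add: ex_wverts_def ex_edir field_simps)
  next
    assume "i = 2" then show ?thesis using b assms
      by (intro exI[of _ "(11 - ex_y12 t) / 15"]) (simp add: ex_wverts_def ex_edir)
  next
    assume "i = 3" then show ?thesis
      by (intro exI[of _ 1]) (simp add: ex_wverts_def ex_edir)
  next
    assume "i = 4" then show ?thesis using assms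
      by (intro exI[of _ "(11 - t) / 11"]) (simp add: ex_wverts_def ex_edir field_simps)
  qed
qed

lemma ex_wpoly_ok:
  assumes "0 < t" "t < 11"
  shows "wpoly_ok ex_poly ex_weight [0..<length ex_poly] t"
proof -
  have "\<exists>c>0. wvert ex_poly ex_weight [0..<5] t i
                 - wvert ex_poly ex_weight [0..<5] t ((i + 5 - 1) mod 5) = c *\<^sub>R edir ex_poly i"
    if "i < 5" for i
    using ex_wverts_edges_parallel[OF assms that] ex_wvert[of t] assms that
    by (simp add: add.commute[of i 4])
  then show ?thesis
    using ex_wlines_meet[of t] ex_wverts[of t] ex_wverts_simple[OF assms]
      ex_wverts_area_pos[OF assms] assms
    by (auto simp: wpoly_ok_def)
qed

lemma ex_collapse: "wevent ex_poly ex_weight 11 [[0..<length ex_poly]] []"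
  unfolding wevent_def
  using ex_wlines_meet[of 11] ex_wverts[of 11] ex_wverts_area_11 by force

lemma ex_wavefront_prop: "wavefront_prop ex_poly ex_weight [0, 11] [[[0..<length ex_poly]], []]"
  unfolding wavefront_prop_def
proof (intro conjI allI impI)
  fix j assume "j + 1 < length [0 :: real, 11]"
  then show "\<forall>t\<in>{[0 :: real, 11] ! j<..<[0, 11] ! (j + 1)}.
      \<forall>p\<in>set ([[[0..<length ex_poly]], []] ! j). wpoly_ok ex_poly ex_weight p t"
    using ex_wpoly_ok by simp
next
  fix j assume "0 < j \<and> j < length [0 :: real, 11]"
  then show "(wevent ex_poly ex_weight ([0, 11] ! j))\<^sup>*\<^sup>*
      ([[[0..<length ex_poly]], []] ! (j - 1)) ([[[0..<length ex_poly]], []] ! j)"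
    using ex_collapse by simp
qed auto

lemma ex_wseg0:
  "0 < t \<Longrightarrow> t < 11 \<Longrightarrow>
    wseg ex_poly ex_weight [0..<length ex_poly] t 0 = closed_segment (0, t) (ex_x01 t, t)"
  by (simp add: wseg_def ex_wvert ex_wverts_def)

lemma ex_face_contains:
  assumes wp: "wavefront_prop ex_poly ex_weight ts Ss"
    and t: "0 < t" "t < 11" "t \<notin> set ts" and x: "0 \<le> x" "x \<le> ex_x01 t"
  shows "(x, t) \<in> wface ex_poly ex_weight ts Ss 0"
proof -
  have "x \<in> closed_segment 0 (ex_x01 t)" using x by (simp add: closed_segment_eq_real_ivl)
  then have "(x, t) \<in> closed_segment (0, t) (ex_x01 t, t)" by (rule Pair_in_closed_segment_const)
  moreover have
    "wseg ex_poly ex_weight [0..<length ex_poly] t 0 \<subseteq> wfragments ex_poly ex_weight ts Ss 0"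
    using wseg_subset_wfragments[OF wp ex_wpoly_ok t, of 0] by simp
  ultimately have "(x, t) \<in> wfragments ex_poly ex_weight ts Ss 0" using ex_wseg0 t by auto
  then show ?thesis unfolding wface_eq_closure_wfragments using closure_subset by blast
qed

lemma ex_face_gap:
  assumes wp: "wavefront_prop ex_poly ex_weight ts Ss"
  shows "(3, 2) \<notin> wface ex_poly ex_weight ts Ss 0"
proof
  assume "(3, 2) \<in> wface ex_poly ex_weight ts Ss 0"
  then obtain y where y: "y \<in> wfragments ex_poly ex_weight ts Ss 0" and d: "dist y (3, 2) < 1/4"
    unfolding wface_eq_closure_wfragments closure_approachable
    by (meson zero_less_divide_1_iff zero_less_numeral)
  obtain t where "0 < t" and yt: "y \<in> wline ex_poly ex_weight 0 t"
    and seg: "t < 11 \<Longrightarrow> y \<in> wseg ex_poly ex_weight [0..<length ex_poly] t 0"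
    using wfragments_before_first_event[OF wp ex_wpoly_ok y] by blast
  have "snd y = t" using yt ex_wline0 \<open>0 < t\<close> by auto
  moreover have "dist (snd y) 2 < 1/4" "dist (fst y) 3 < 1/4"
    using dist_snd_le[of y "(3, 2)"] dist_fst_le[of y "(3, 2)"] d by auto
  ultimately have t: "7/4 < t" "t < 9/4" and fy: "11/4 < fst y"
    unfolding dist_real_def abs_less_iff by linarith+
  then have "y \<in> closed_segment (0, t) (ex_x01 t, t)" using seg ex_wseg0 by simp
  moreover have "0 < ex_x01 t" "ex_x01 t < 11/4" using t by (auto simp: ex_x01_def max_def)
  ultimately show False
    using fy by (cases y) (auto dest!: closed_segment_PairD simp: closed_segment_eq_real_ivl)
qed

lemma ex_not_monotone:
  assumes wp: "wavefront_prop ex_poly ex_weight ts Ss"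
  shows "\<not> monotone_wrt (wface ex_poly ex_weight ts Ss 0) (edir ex_poly 0)"
proof
  let ?F = "wface ex_poly ex_weight ts Ss 0"
  let ?S = "?F \<inter> {x. fst x = 3}"
  assume "monotone_wrt ?F (edir ex_poly 0)"
  then have "connected (?F \<inter> {x. inner x (edir ex_poly 0) = 12})"
    unfolding monotone_wrt_def by blast
  moreover have "{x. inner x (edir ex_poly 0) = 12} = {x :: pt. fst x = 3}"
    using ex_edir[of 0] by (simp add: set_eq_iff inner_prod_def)
  ultimately have S: "connected ?S" by simp
  obtain t1 where t1: "t1 \<in> {1/2<..<1}" "t1 \<notin> set ts"
    by (rule obtain_Ioo_not_in_finite[of "1/2" 1 "set ts"]) auto
  obtain t3 where t3: "t3 \<in> {4<..<5}" "t3 \<notin> set ts"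
    by (rule obtain_Ioo_not_in_finite[of 4 5 "set ts"]) auto
  have "3 \<le> ex_x01 t1" "3 \<le> ex_x01 t3" using t1(1) t3(1) by (auto simp: ex_x01_def max_def)
  then have S1: "(3, t1) \<in> ?S" and S3: "(3, t3) \<in> ?S"
    using ex_face_contains[OF wp, of t1 3] ex_face_contains[OF wp, of t3 3] t1 t3 by auto
  have "(3, 2) \<in> ?S"
    by (rule connected_vertical_section[OF S _ S1 S3]) (use t1 t3 in auto)
  with ex_face_gap[OF wp] show False by simp
qed

theorem lemma7:
  shows "\<exists>vs w e. simple_polygon vs \<and> signed_area vs > 0 \<and> (\<forall>i<length vs. 0 \<le> w i) \<and>
           e < length vs \<and>
           (\<exists>ts Ss. wavefront_prop vs w ts Ss) \<and>
           (\<forall>ts Ss. wavefront_prop vs w ts Ss \<longrightarrow>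
                      \<not> monotone_wrt (wface vs w ts Ss e) (edir vs e))"
proof (intro exI[of _ ex_poly] exI[of _ ex_weight] exI[of _ 0] conjI)
  show "simple_polygon ex_poly" by (rule ex_poly_simple)
  show "signed_area ex_poly > 0" by (simp add: ex_poly_def signed_area_def)
  show "\<forall>i<length ex_poly. 0 \<le> ex_weight i" by (simp add: ex_weight_def)
  show "0 < length ex_poly" by simp
  show "\<exists>ts Ss. wavefront_prop ex_poly ex_weight ts Ss" using ex_wavefront_prop by blast
  show "\<forall>ts Ss. wavefront_prop ex_poly ex_weight ts Ss \<longrightarrow>
      \<not> monotone_wrt (wface ex_poly ex_weight ts Ss 0) (edir ex_poly 0)"
    using ex_not_monotone by blast
qed

end
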